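(* There is no real polynomial $p$ such that the restriction $p|_{[0,1]}$ satisfies $\Omega_{p|_{[0,1]}}=\{0,2,4\}$, whereas there exists a continuous function $f:[0,1]\to\mathbb{R}$ with $\Omega_f=\{0,2,4\}$.
   Context: $\mathbb{N}=\{0,1,2,\dots\}$. For $f:[0,1]\to\mathbb{R}$, $\Omega_f=\{n\in\mathbb{N}\cup\{\infty\} : \exists x\in\mathbb{R}\text{ with } |f^{-1}(x)|=n\}$, where $|f^{-1}(x)|$ is the cardinality of $\{t\in[0,1]: f(t)=x\}$ and $\infty$ stands for an infinite cardinality. *)

theory Defs
  imports "HOL-Analysis.Analysis" "HOL-Computational_Algebra.Polynomial" "HOL-Library.Extended_Nat"
begin

definition fibre_card :: "(real \<Rightarrow> real) \<Rightarrow> real \<Rightarrow> enat" where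
  "fibre_card f x = (if finite {t \<in> {0..1}. f t = x}
                      then enat (card {t \<in> {0..1}. f t = x}) else \<infinity>)"

definition Omega :: "(real \<Rightarrow> real) \<Rightarrow> enat set" where
  "Omega f = {n. \<exists>x::real. fibre_card f x = n}"

end

theory Submission
  imports Defs
begin

text \<open>If p is not constant, the critical points of p cut [0,1] into finitely many intervals on
  which p is injective, so every fibre of p consists of the breakpoints lying on the level y and
  one point in each piece whose end values enclose y. For such a zigzag through the values
  v 0, ..., v n (consecutive values distinct) the counts N satisfy
  N y + N y' + [v 0 = w] + [v n = w] = 2 N w whenever w is the only value between y and y'.
  If all counts were even, descending through the values would give
  N y \<equiv> [y < v 0] + [y < v n] (mod 4) for every y that is not a value, which fails below all
  values (0 versus 2). A constant polynomial has an infinite fibre.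

  A continuous example therefore needs infinitely many monotone pieces: on (0,1/2] take the
  self-similar function with f (t/2) = f t / 2 generated by a V-shaped piece on (1/4,1/2] with
  values 1/2, 1/4, 1, and continue with three linear pieces through the values 1, 1/2, 1, 0.
  Levels in (0,1) are then met exactly four times and the levels 0 and 1 twice.\<close>

section \<open>Level counts of zigzags\<close>

text \<open>The number of solutions of f x = y for a continuous f that is strictly monotone between
  consecutive breakpoints, at which it takes the values v 0, ..., v n.\<close>
definition zigzag_count :: "(nat \<Rightarrow> real) \<Rightarrow> nat \<Rightarrow> real \<Rightarrow> nat" where
  "zigzag_count v n y =
     (\<Sum>i<n. of_bool (min (v i) (v (Suc i)) < y \<and> y < max (v i) (v (Suc i))))
     + (\<Sum>i\<le>n. of_bool (v i = y))"

lemma zigzag_count_eq_0: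
  assumes "(\<forall>i\<le>n. v i < y) \<or> (\<forall>i\<le>n. y < v i)"
  shows "zigzag_count v n y = 0"
proof -
  have "\<not> (min (v i) (v (Suc i)) < y \<and> y < max (v i) (v (Suc i)))" if "i < n" for i
  proof -
    have "i \<le> n" "Suc i \<le> n" using that by auto
    then have "(v i < y \<and> v (Suc i) < y) \<or> (y < v i \<and> y < v (Suc i))"
      using assms by blast
    then show ?thesis by (auto simp: min_def max_def)
  qed
  moreover have "v i \<noteq> y" if "i \<le> n" for i
    using assms that by auto
  ultimately show ?thesis
    unfolding zigzag_count_def by (auto intro!: sum.neutral)
qed

lemma zigzag_count_level_crossing:
  assumes "\<forall>i<n. v i \<noteq> v (Suc i)" and "y < w" "w < y'"
    and levels: "\<forall>i\<le>n. v i < y \<or> v i = w \<or> y' < v i"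
  shows "zigzag_count v n y + zigzag_count v n y' + of_bool (v 0 = w) + of_bool (v n = w)
         = 2 * zigzag_count v n w"
proof -
  define s where "s i z = (of_bool (min (v i) (v (Suc i)) < z \<and> z < max (v i) (v (Suc i))) :: nat)"
    for i z
  define e where "e i = (of_bool (v i = w) :: nat)" for i
  have segment: "s i y + s i y' = 2 * s i w + e i + e (Suc i)" if "i < n" for i
  proof -
    have "v i < y \<or> v i = w \<or> y' < v i" "v (Suc i) < y \<or> v (Suc i) = w \<or> y' < v (Suc i)"
      using levels that by auto
    then show ?thesis
      using assms(1,2,3) that unfolding s_def e_def by (auto simp: min_def max_def)
  qed
  have vertex: "v i \<noteq> y \<and> v i \<noteq> y'" if "i \<le> n" for i
    using levels assms(2,3) that by force
  have "(\<Sum>i\<le>n. e i) = (\<Sum>i<n. e i) + e n"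
    by (simp add: lessThan_Suc_atMost[symmetric])
  moreover have "(\<Sum>i\<le>n. e i) = e 0 + (\<Sum>i<n. e (Suc i))"
    by (rule sum.atMost_shift)
  ultimately have ends: "(\<Sum>i<n. e i + e (Suc i)) + e 0 + e n = 2 * (\<Sum>i\<le>n. e i)"
    by (simp add: sum.distrib)
  have "zigzag_count v n y + zigzag_count v n y' = (\<Sum>i<n. s i y + s i y')"
    using vertex unfolding zigzag_count_def s_def by (simp add: sum.distrib)
  also have "\<dots> = 2 * (\<Sum>i<n. s i w) + (\<Sum>i<n. e i + e (Suc i))"
    using segment by (simp add: sum.distrib sum_distrib_left add.assoc)
  finally show ?thesis
    using ends unfolding zigzag_count_def s_def e_def by simp
qed

lemma finite_gap_above:
  fixes w :: real
  assumes "finite L"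
  obtains y' where "w < y'" "\<And>u. u \<in> L \<Longrightarrow> w < u \<Longrightarrow> y' < u"
proof (cases "{u\<in>L. w < u} = {}")
  case True
  then show ?thesis using that[of "w + 1"] by auto
next
  case False
  define m where "m = Min {u\<in>L. w < u}"
  have "m \<in> {u\<in>L. w < u}"
    using assms False unfolding m_def by (intro Min_in) auto
  moreover have "m \<le> u" if "u \<in> L" "w < u" for u
    using assms that unfolding m_def by (intro Min_le) auto
  ultimately show ?thesis using that[of "(w + m) / 2"] by fastforce
qed

lemma mod_4_step:
  fixes N N' W e E :: nat
  assumes sum: "N + N' + e = 2 * W" and "even N" "even N'" "even W" and "N' mod 4 = E mod 4"
  shows "N mod 4 = (E + e) mod 4"
proof -
  obtain a b c where abc: "N = 2 * a" "N' = 2 * b" "W = 2 * c"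
    using assms(2-4) by (auto elim!: evenE)
  have "int N + int N' + int e = 2 * int W"
    using arg_cong[OF sum, of int] by simp
  then have diff: "int N - int (E + e) = 4 * (int a - int c) + (int N' - int E)"
    using abc by simp
  have "(4::int) dvd int N' - int E"
    using assms(5) by (metis mod_eq_dvd_iff of_nat_mod of_nat_numeral)
  then have "(4::int) dvd int N - int (E + e)"
    unfolding diff by (rule dvd_add[OF dvd_triv_left])
  then show ?thesis
    by (metis mod_eq_dvd_iff of_nat_mod of_nat_numeral of_nat_eq_iff)
qed

lemma zigzag_count_mod_4:
  assumes distinct: "\<forall>i<n. v i \<noteq> v (Suc i)" and even: "\<forall>z. even (zigzag_count v n z)"
    and "y \<notin> v ` {..n}"
  shows "zigzag_count v n y mod 4 = (of_bool (y < v 0) + of_bool (y < v n)) mod 4"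
proof -
  define L where "L = v ` {..n}"
  have "finite L" unfolding L_def by simp
  have "zigzag_count v n y mod 4 = (of_bool (y < v 0) + of_bool (y < v n)) mod 4"
    if "y \<notin> L" "card {u\<in>L. y < u} = m" for m y
    using that
  proof (induction m arbitrary: y)
    case 0
    then have "\<forall>i\<le>n. v i < y"
      using \<open>finite L\<close> unfolding L_def by (fastforce simp: not_less_iff_gr_or_eq)
    then have "\<not> y < v 0" "\<not> y < v n"
      by (auto dest: less_asym)
    with \<open>\<forall>i\<le>n. v i < y\<close> show ?case
      by (simp add: zigzag_count_eq_0)
  next
    case (Suc m)
    define A where "A = {u\<in>L. y < u}"
    have "finite A" using \<open>finite L\<close> unfolding A_def by simp
    have "A \<noteq> {}" using Suc.prems(2) unfolding A_def by (metis card.empty nat.distinct(1))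
    define w where "w = Min A"
    have "w \<in> A" and w_least: "\<And>u. u \<in> A \<Longrightarrow> w \<le> u"
      using \<open>finite A\<close> \<open>A \<noteq> {}\<close> unfolding w_def by auto
    obtain y' where "w < y'" and gap: "\<And>u. u \<in> L \<Longrightarrow> w < u \<Longrightarrow> y' < u"
      using finite_gap_above[OF \<open>finite L\<close>] by blast
    have "y < w" using \<open>w \<in> A\<close> unfolding A_def by simp
    have levels: "u < y \<or> u = w \<or> y' < u" if "u \<in> L" for u
      using that Suc.prems(1) w_least gap unfolding A_def by (metis le_less mem_Collect_eq not_less_iff_gr_or_eq)
    have "y' \<notin> L" using levels \<open>y < w\<close> \<open>w < y'\<close> by force
    moreover have "{u\<in>L. y' < u} = A - {w}"
      using levels \<open>y < w\<close> \<open>w < y'\<close> gap \<open>w \<in> A\<close> unfolding A_def by force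
    then have "card {u\<in>L. y' < u} = m"
      using \<open>w \<in> A\<close> \<open>finite A\<close> Suc.prems(2) unfolding A_def by simp
    ultimately have IH: "zigzag_count v n y' mod 4 = (of_bool (y' < v 0) + of_bool (y' < v n)) mod 4"
      using Suc.IH by blast
    have vL: "v i \<in> L" if "i \<le> n" for i using that unfolding L_def by simp
    have crossing: "zigzag_count v n y + zigzag_count v n y' + of_bool (v 0 = w) + of_bool (v n = w)
         = 2 * zigzag_count v n w"
      using distinct \<open>y < w\<close> \<open>w < y'\<close> levels vL by (intro zigzag_count_level_crossing) auto
    have ends: "of_bool (y < v i) = of_bool (y' < v i) + (of_bool (v i = w) :: nat)" if "i \<le> n" for i
      using levels[OF vL[OF that]] \<open>y < w\<close> \<open>w < y'\<close> by auto
    have "zigzag_count v n y mod 4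
        = (of_bool (y' < v 0) + of_bool (y' < v n) + (of_bool (v 0 = w) + of_bool (v n = w))) mod 4"
    proof (rule mod_4_step[OF _ _ _ _ IH])
      show "zigzag_count v n y + zigzag_count v n y' + (of_bool (v 0 = w) + of_bool (v n = w))
          = 2 * zigzag_count v n w"
        using crossing by (simp only: add.assoc)
    qed (use even in blast)+
    also have "\<dots> = (of_bool (y < v 0) + of_bool (y < v n)) mod 4"
      using ends[of 0] ends[of n] by simp
    finally show ?case .
  qed
  from this[OF _ refl] show ?thesis using assms(3) unfolding L_def by blast
qed

lemma zigzag_count_odd:
  assumes "\<forall>i<n. v i \<noteq> v (Suc i)"
  shows "\<exists>z. odd (zigzag_count v n z)"
proof (rule ccontr)
  assume "\<nexists>z. odd (zigzag_count v n z)"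
  then have even: "\<forall>z. even (zigzag_count v n z)" by blast
  define y where "y = Min (v ` {..n}) - 1"
  have below: "\<forall>i\<le>n. y < v i"
  proof (intro allI impI)
    fix i assume "i \<le> n"
    then have "Min (v ` {..n}) \<le> v i" by (intro Min_le) auto
    then show "y < v i" unfolding y_def by linarith
  qed
  then have "y \<notin> v ` {..n}" by force
  from zigzag_count_mod_4[OF assms even this] below show False
    by (simp add: zigzag_count_eq_0)
qed

section \<open>Fibres of piecewise injective functions\<close>

lemma card_fibre_open_interval_inj:
  fixes f :: "'a::linear_continuum_topology \<Rightarrow> 'b::linorder_topology"
  assumes "a < b" and cont: "continuous_on {a..b} f" and inj: "inj_on f {a..b}"
  shows "finite {x. a < x \<and> x < b \<and> f x = y}
    \<and> card {x. a < x \<and> x < b \<and> f x = y} = of_bool (min (f a) (f b) < y \<and> y < max (f a) (f b))"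
proof (cases "min (f a) (f b) < y \<and> y < max (f a) (f b)")
  case True
  have "\<exists>x. a \<le> x \<and> x \<le> b \<and> f x = y"
  proof (cases "f a \<le> f b")
    case True
    with \<open>min (f a) (f b) < y \<and> y < max (f a) (f b)\<close> have "f a \<le> y" "y \<le> f b"
      by (auto simp: min_def max_def intro: less_imp_le)
    then show ?thesis by (rule IVT'[OF _ _ less_imp_le[OF \<open>a < b\<close>] cont])
  next
    case False
    with \<open>min (f a) (f b) < y \<and> y < max (f a) (f b)\<close> have "f b \<le> y" "y \<le> f a"
      by (auto simp: min_def max_def intro: less_imp_le)
    then show ?thesis by (rule IVT2'[OF _ _ less_imp_le[OF \<open>a < b\<close>] cont])
  qed
  then obtain x where x: "a \<le> x" "x \<le> b" "f x = y" by blast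
  have "y \<noteq> f a" "y \<noteq> f b"
    using True by (auto simp: min_def max_def split: if_splits)
  with x have "a < x" "x < b" by (auto simp: le_less)
  have "{x. a < x \<and> x < b \<and> f x = y} = {x}"
  proof (intro equalityI subsetI)
    fix z assume "z \<in> {x. a < x \<and> x < b \<and> f x = y}"
    then show "z \<in> {x}" using inj_onD[OF inj, of z x] x by (auto intro: less_imp_le)
  qed (use \<open>a < x\<close> \<open>x < b\<close> x in auto)
  then show ?thesis using True by simp
next
  case False
  have empty: "{x. a < x \<and> x < b \<and> f x = y} = {}"
    using continuous_inj_imp_mono[OF _ _ cont inj] False by (fastforce simp: min_def max_def)
  show ?thesis unfolding empty using False by simp
qed

lemma between_consecutive:
  fixes t :: "nat \<Rightarrow> 'a::linorder"
  assumes "t 0 < x" "x < t n" "\<forall>i\<le>n. t i \<noteq> x"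
  shows "\<exists>i<n. t i < x \<and> x < t (Suc i)"
  using assms
proof (induction n)
  case (Suc n)
  show ?case
  proof (cases "x < t n")
    case True
    with Suc show ?thesis by (metis le_SucI less_SucI)
  next
    case False
    with Suc.prems have "t n < x" by (metis le_SucI le_refl linorder_neqE)
    with Suc.prems(2) show ?thesis by blast
  qed
qed simp

lemma card_fibre_piecewise_injective:
  fixes f :: "real \<Rightarrow> real" and t :: "nat \<Rightarrow> real"
  assumes cont: "continuous_on {t 0..t n} f" and t: "strict_mono_on {..n} t"
    and inj: "\<forall>i<n. inj_on f {t i..t (Suc i)}"
  shows "finite {x\<in>{t 0..t n}. f x = y}
    \<and> card {x\<in>{t 0..t n}. f x = y} = zigzag_count (\<lambda>i. f (t i)) n y"
proof -
  have t_less: "t i < t j" if "i < j" "j \<le> n" for i j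
    using strict_mono_onD[OF t] that by simp
  have t_le: "t i \<le> t j" if "i \<le> j" "j \<le> n" for i j
    using t_less that by (metis le_less)
  define piece where "piece i = {x. t i < x \<and> x < t (Suc i) \<and> f x = y}" for i
  define I where "I = {i. i \<le> n \<and> f (t i) = y}"
  have piece_card: "finite (piece i)
      \<and> card (piece i) = of_bool (min (f (t i)) (f (t (Suc i))) < y \<and> y < max (f (t i)) (f (t (Suc i))))"
    if "i < n" for i
    unfolding piece_def
  proof (rule card_fibre_open_interval_inj)
    show "continuous_on {t i..t (Suc i)} f"
      using t_le[of 0 i] t_le[of "Suc i" n] that by (intro continuous_on_subset[OF cont]) auto
  qed (use t_less inj that in auto)
  have fibre: "{x\<in>{t 0..t n}. f x = y} = t ` I \<union> (\<Union>i<n. piece i)"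
  proof (intro equalityI subsetI)
    fix x assume x: "x \<in> {x\<in>{t 0..t n}. f x = y}"
    show "x \<in> t ` I \<union> (\<Union>i<n. piece i)"
    proof (cases "\<exists>i\<le>n. t i = x")
      case True
      with x show ?thesis unfolding I_def by auto
    next
      case False
      with x have "t 0 < x" "x < t n"
        by (auto simp: le_less)
      with False show ?thesis
        using between_consecutive[of t x n] x unfolding piece_def by auto
    qed
  next
    fix x assume "x \<in> t ` I \<union> (\<Union>i<n. piece i)"
    then show "x \<in> {x\<in>{t 0..t n}. f x = y}"
    proof
      assume "x \<in> t ` I"
      then show ?thesis using t_le[of 0] t_le[of _ n] unfolding I_def by auto
    next
      assume "x \<in> (\<Union>i<n. piece i)"
      then obtain i where "i < n" "t i < x" "x < t (Suc i)" "f x = y"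
        unfolding piece_def by auto
      then show ?thesis using t_le[of 0 i] t_le[of "Suc i" n] by auto
    qed
  qed
  have vertices_not_in_pieces: "t ` I \<inter> (\<Union>i<n. piece i) = {}"
  proof -
    have "t j \<notin> piece i" if "j \<le> n" "i < n" for i j
      using t_le[of j i] t_le[of "Suc i" j] that unfolding piece_def
      by (cases "j \<le> i") (auto simp: not_le)
    then show ?thesis unfolding I_def by auto
  qed
  have pieces_disjoint: "piece i \<inter> piece j = {}" if "i < j" "j < n" for i j
    using t_le[of "Suc i" j] that unfolding piece_def by auto
  have "card (t ` I) = (\<Sum>i\<le>n. of_bool (f (t i) = y))"
  proof -
    have "inj_on t I"
      using t_less unfolding I_def by (intro inj_onI) (metis linorder_neqE_nat mem_Collect_eq order.irrefl)
    then show ?thesis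
      by (simp add: card_image I_def Int_def conj_commute)
  qed
  moreover have "card (\<Union>i<n. piece i)
      = (\<Sum>i<n. of_bool (min (f (t i)) (f (t (Suc i))) < y \<and> y < max (f (t i)) (f (t (Suc i)))))"
    using pieces_disjoint piece_card
    by (subst card_UN_disjoint) (auto simp: Int_commute intro: linorder_neqE_nat)
  moreover have "finite (\<Union>i<n. piece i)" using piece_card by auto
  moreover have "finite (t ` I)" unfolding I_def by simp
  ultimately show ?thesis
    unfolding fibre zigzag_count_def using vertices_not_in_pieces by (simp add: card_Un_disjoint)
qed

section \<open>Fibres of polynomials\<close>

lemma finite_strict_enumeration:
  fixes S :: "'a::linorder set"
  assumes "finite S" "S \<noteq> {}"
  obtains n :: nat and t :: "nat \<Rightarrow> 'a" where "strict_mono_on {..n} t" "t ` {..n} = S"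
proof -
  define l where "l = sorted_list_of_set S"
  have "sorted_wrt (<) l" "set l = S" "l \<noteq> []"
    using assms unfolding l_def by auto
  define n where "n = length l - 1"
  have "Suc n = length l"
    using \<open>l \<noteq> []\<close> unfolding n_def by simp
  then have indices: "{..n} = {..<length l}"
    using lessThan_Suc_atMost by metis
  have "strict_mono_on {..n} ((!) l)"
    using \<open>sorted_wrt (<) l\<close> unfolding indices
    by (intro strict_mono_onI) (auto intro: sorted_wrt_nth_less)
  moreover have "(!) l ` {..n} = S"
    unfolding indices \<open>set l = S\<close>[symmetric] by (auto simp: in_set_conv_nth)
  ultimately show ?thesis
    by (rule that)
qed

lemma poly_inj_on_if_no_critical_point:
  fixes p :: "real poly"
  assumes "\<forall>x. c < x \<and> x < d \<longrightarrow> poly (pderiv p) x \<noteq> 0"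
  shows "inj_on (poly p) {c..d}"
proof (rule inj_onI, rule ccontr)
  fix a b assume ab: "a \<in> {c..d}" "b \<in> {c..d}" "poly p a = poly p b" "a \<noteq> b"
  have "\<exists>z. min a b < z \<and> z < max a b \<and> DERIV (poly p) z :> 0"
    using ab by (intro Rolle) (auto simp: min_def max_def continuous_on_poly)
  then obtain z where z: "min a b < z" "z < max a b" "DERIV (poly p) z :> 0"
    by blast
  then have "poly (pderiv p) z = 0"
    using DERIV_unique[OF poly_DERIV] by blast
  moreover have "c < z" "z < d"
    using z(1,2) ab(1,2) by auto
  ultimately show False
    using assms by blast
qed

lemma poly_piecewise_injective:
  fixes p :: "real poly"
  assumes "pderiv p \<noteq> 0" "a < b"
  obtains n t where "strict_mono_on {..n} t" "t 0 = a" "t n = b"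
    "\<forall>i<n. inj_on (poly p) {t i..t (Suc i)}"
proof -
  define S where "S = {a, b} \<union> {x. a < x \<and> x < b \<and> poly (pderiv p) x = 0}"
  have "finite S"
    unfolding S_def using poly_roots_finite[OF assms(1)] by (auto intro: finite_subset)
  moreover have "S \<noteq> {}"
    unfolding S_def by simp
  ultimately obtain n :: nat and t :: "nat \<Rightarrow> real"
    where t: "strict_mono_on {..n} t" and image: "t ` {..n} = S"
    by (rule finite_strict_enumeration)
  have t_less_iff: "t i < t j \<longleftrightarrow> i < j" if "i \<le> n" "j \<le> n" for i j
    using strict_mono_on_less[OF t] that by simp
  have t_le_iff: "t i \<le> t j \<longleftrightarrow> i \<le> j" if "i \<le> n" "j \<le> n" for i j
    using strict_mono_on_less_eq[OF t] that by simp
  have in_ab: "a \<le> t i \<and> t i \<le> b" if "i \<le> n" for i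
  proof -
    have "t i \<in> S" using image that by blast
    then show ?thesis using \<open>a < b\<close> unfolding S_def by auto
  qed
  have "a \<in> t ` {..n}" "b \<in> t ` {..n}"
    unfolding image S_def by auto
  then obtain ia ib where "ia \<le> n" "t ia = a" "ib \<le> n" "t ib = b"
    by auto
  have "t 0 = a"
    using t_le_iff[of 0 ia] in_ab[of 0] \<open>ia \<le> n\<close> \<open>t ia = a\<close> by auto
  moreover have "t n = b"
    using t_le_iff[of ib n] in_ab[of n] \<open>ib \<le> n\<close> \<open>t ib = b\<close> by auto
  moreover have "\<forall>i<n. inj_on (poly p) {t i..t (Suc i)}"
  proof (intro allI impI poly_inj_on_if_no_critical_point notI)
    fix i x assume "i < n" and x: "t i < x \<and> x < t (Suc i)" "poly (pderiv p) x = 0"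
    then have "x \<in> S"
      using in_ab[of i] in_ab[of "Suc i"] \<open>i < n\<close> unfolding S_def by auto
    then obtain j where "j \<le> n" "t j = x"
      using image by auto
    then show False
      using x t_less_iff[of i j] t_less_iff[of j "Suc i"] \<open>i < n\<close> by auto
  qed
  ultimately show ?thesis
    by (rule that[OF t])
qed

lemma poly_fibre_infinite_or_odd:
  fixes p :: "real poly"
  shows "\<exists>y. infinite {x\<in>{0..1}. poly p x = y} \<or> odd (card {x\<in>{0..1}. poly p x = y})"
proof (cases "pderiv p = 0")
  case True
  then obtain c where "p = [:c:]"
    using pderiv_eq_0_iff degree0_coeffs by blast
  then have "{x\<in>{0..1}. poly p x = c} = {0..1::real}"
    by auto
  then show ?thesis
    by (metis infinite_Icc zero_less_one)
next
  case False
  then obtain n t where t: "strict_mono_on {..n} t" "t 0 = 0" "t n = 1"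
    and inj: "\<forall>i<n. inj_on (poly p) {t i..t (Suc i)}"
    using poly_piecewise_injective[of p 0 1] by auto
  have "poly p (t i) \<noteq> poly p (t (Suc i))" if "i < n" for i
  proof
    assume "poly p (t i) = poly p (t (Suc i))"
    moreover have "t i < t (Suc i)"
      using strict_mono_onD[OF t(1)] that by simp
    ultimately show False
      using inj_onD[OF inj[rule_format, OF that]] by fastforce
  qed
  then obtain y where "odd (zigzag_count (\<lambda>i. poly p (t i)) n y)"
    using zigzag_count_odd[of n "\<lambda>i. poly p (t i)"] by blast
  then show ?thesis
    using card_fibre_piecewise_injective[OF continuous_on_poly[OF continuous_on_id] t(1) inj, of y] t
    by (intro exI[of _ y]) simp
qed

section \<open>A continuous function whose fibres have 0, 2 or 4 points\<close>

definition vee :: "real \<Rightarrow> real" where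
  "vee t = (if t \<le> 3/8 then 1 - 2*t else 6*t - 2)"

definition dyadic_scale :: "real \<Rightarrow> nat" where
  "dyadic_scale t = (LEAST k. t * 2^k > 1/4)"

definition self_similar :: "real \<Rightarrow> real" where
  "self_similar t = vee (t * 2^dyadic_scale t) / 2^dyadic_scale t"

definition witness :: "real \<Rightarrow> real" where
  "witness t =
     (if t \<le> 0 then 0 else if t \<le> 1/2 then self_similar t else if t \<le> 5/8 then 3 - 4*t
      else if t \<le> 3/4 then 4*t - 2 else 4 - 4*t)"

lemma dyadic_scale_exists: "0 < t \<Longrightarrow> \<exists>k. t * 2^k > (1/4::real)"
proof -
  assume t: "0 < t"
  obtain k where "1/(4*t) < (2::real)^k" using real_arch_pow[of 2 "1/(4*t)"] by auto
  then have "1/4 < t * 2^k" using t by (simp add: field_simps)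
  then show ?thesis by blast
qed

lemma dyadic_scale_bounds:
  assumes "0 < t" "t \<le> 1/2"
  shows "1/4 < t * 2^dyadic_scale t \<and> t * 2^dyadic_scale t \<le> 1/2"
proof
  show "1/4 < t * 2^dyadic_scale t" unfolding dyadic_scale_def using LeastI_ex[OF dyadic_scale_exists[OF assms(1)]] .
  show "t * 2^dyadic_scale t \<le> 1/2"
  proof (cases "dyadic_scale t")
    case 0 then show ?thesis using assms by simp
  next
    case (Suc m)
    then have "m < dyadic_scale t" by simp
    then have "\<not> (t * 2^m > 1/4)" unfolding dyadic_scale_def by (rule not_less_Least)
    then show ?thesis using Suc by simp
  qed
qed

lemma dyadic_scale_eq_0: "1/4 < t \<Longrightarrow> dyadic_scale t = 0"
  unfolding dyadic_scale_def by simp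

lemma dyadic_scale_half:
  assumes "0 < t" "t \<le> 1/2"
  shows "dyadic_scale (t/2) = Suc (dyadic_scale t)"
proof -
  obtain k where k: "t * 2^k > 1/4" using dyadic_scale_exists[OF assms(1)] by blast
  have "(LEAST k. t/2 * 2^k > (1/4::real)) = Suc (LEAST m. t/2 * 2^(Suc m) > (1/4::real))"
    by (rule Least_Suc[of _ "Suc k"]) (use k assms in auto)
  then show ?thesis unfolding dyadic_scale_def by simp
qed

lemma self_similar_eq_vee: "1/4 < t \<Longrightarrow> self_similar t = vee t"
  unfolding self_similar_def using dyadic_scale_eq_0 by simp

lemma self_similar_half:
  assumes "0 < t" "t \<le> 1/2"
  shows "self_similar (t/2) = self_similar t / 2"
  unfolding self_similar_def using dyadic_scale_half[OF assms] by simp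

lemma self_similar_bounds:
  assumes "0 < t" "t \<le> 1/2"
  shows "0 < self_similar t \<and> self_similar t \<le> 1 \<and> self_similar t \<le> 4*t"
proof -
  define k where "k = dyadic_scale t"
  define u where "u = t * 2^k"
  have "1/4 < u" "u \<le> 1/2"
    using dyadic_scale_bounds[OF assms] unfolding u_def k_def by auto
  then have vee_range: "1/4 \<le> vee u" "vee u \<le> 1"
    unfolding vee_def by auto
  have self_similar_eq: "self_similar t = vee u / 2^k"
    unfolding self_similar_def u_def k_def by simp
  have "vee u / 2^k \<le> 1 / 2^k"
    using vee_range by (simp add: divide_right_mono)
  also have "1 / 2^k < 4 * t"
    using \<open>1/4 < u\<close> unfolding u_def by (simp add: field_simps)
  finally have "self_similar t \<le> 4*t"
    using self_similar_eq by simp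
  moreover have "vee u \<le> 2^k"
    using vee_range(2) one_le_power[of "2::real" k] by linarith
  ultimately show ?thesis
    using self_similar_eq vee_range by simp
qed

lemma witness_eq_self_similar: "0 < t \<Longrightarrow> t \<le> 1/2 \<Longrightarrow> witness t = self_similar t"
  unfolding witness_def by simp

lemma witness_half: "0 < t \<Longrightarrow> t \<le> 1/4 \<Longrightarrow> witness t = witness (2*t) / 2"
  using self_similar_half[of "2*t"] by (simp add: witness_eq_self_similar)

lemma witness_quarter: "witness (1/4) = 1/2"
  using witness_half[of "1/4"] by (simp add: witness_def self_similar_eq_vee vee_def)

lemma continuous_on_Icc_join:
  fixes f :: "'a::linorder_topology \<Rightarrow> 'b::topological_space"
  assumes "continuous_on {a..b} f" "continuous_on {b..c} f" "a \<le> b" "b \<le> c"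
  shows "continuous_on {a..c} f"
proof -
  have "{a..c} = {a..b} \<union> {b..c}" using assms(3,4) by auto
  then show ?thesis using continuous_on_closed_Un[OF _ _ assms(1,2)] by simp
qed

lemma continuous_on_witness_quarter_one: "continuous_on {1/4..1} witness"
proof -
  have left_vee: "continuous_on {1/4..3/8} witness"
  proof (rule continuous_on_eq[of _ "\<lambda>x. 1 - 2*x"])
    show "continuous_on {1/4..3/8} (\<lambda>x::real. 1 - 2*x)" by (intro continuous_intros)
    fix x :: real assume x: "x \<in> {1/4..3/8}"
    show "1 - 2*x = witness x"
    proof (cases "x = 1/4")
      case True then show ?thesis unfolding True using witness_quarter by simp
    next
      case False then show ?thesis using x by (simp add: witness_eq_self_similar self_similar_eq_vee vee_def)
    qed
  qed
  have right_vee: "continuous_on {3/8..1/2} witness"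
  proof (rule continuous_on_eq[of _ "\<lambda>x. 6*x - 2"])
    show "continuous_on {3/8..1/2} (\<lambda>x::real. 6*x - 2)" by (intro continuous_intros)
    fix x :: real assume x: "x \<in> {3/8..1/2}"
    show "6*x - 2 = witness x" using x by (auto simp: witness_eq_self_similar self_similar_eq_vee vee_def)
  qed
  have first_drop: "continuous_on {1/2..5/8} witness"
  proof (rule continuous_on_eq[of _ "\<lambda>x. 3 - 4*x"])
    show "continuous_on {1/2..5/8} (\<lambda>x::real. 3 - 4*x)" by (intro continuous_intros)
    fix x :: real assume x: "x \<in> {1/2..5/8}"
    show "3 - 4*x = witness x"
    proof (cases "x = 1/2")
      case True then show ?thesis by (simp add: witness_eq_self_similar self_similar_eq_vee vee_def)
    next
      case False then show ?thesis using x by (simp add: witness_def)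
    qed
  qed
  have rise: "continuous_on {5/8..3/4} witness"
  proof (rule continuous_on_eq[of _ "\<lambda>x. 4*x - 2"])
    show "continuous_on {5/8..3/4} (\<lambda>x::real. 4*x - 2)" by (intro continuous_intros)
    fix x :: real assume x: "x \<in> {5/8..3/4}"
    show "4*x - 2 = witness x" using x by (auto simp: witness_def)
  qed
  have last_drop: "continuous_on {3/4..1} witness"
  proof (rule continuous_on_eq[of _ "\<lambda>x. 4 - 4*x"])
    show "continuous_on {3/4..1} (\<lambda>x::real. 4 - 4*x)" by (intro continuous_intros)
    fix x :: real assume x: "x \<in> {3/4..1}"
    show "4 - 4*x = witness x" using x by (auto simp: witness_def)
  qed
  have "continuous_on {1/4..1/2} witness" by (rule continuous_on_Icc_join[OF left_vee right_vee]) auto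
  then have "continuous_on {1/4..5/8} witness" by (rule continuous_on_Icc_join[OF _ first_drop]) auto
  then have "continuous_on {1/4..3/4} witness" by (rule continuous_on_Icc_join[OF _ rise]) auto
  then show ?thesis by (rule continuous_on_Icc_join[OF _ last_drop]) auto
qed

lemma continuous_on_witness_dyadic: "continuous_on {(1/2)^(n+2)..1} witness"
proof (induction n)
  case 0
  then show ?case
    using continuous_on_witness_quarter_one by (simp add: power2_eq_square)
next
  case (Suc n)
  define a :: real where "a = (1/2)^(n+3)"
  define b :: real where "b = (1/2)^(n+2)"
  have "b \<le> (1/2)^2"
    unfolding b_def by (rule power_decreasing) auto
  moreover have "0 < a" "2*a = b"
    unfolding a_def b_def by (simp_all add: power_add eval_nat_numeral)
  ultimately have ab: "0 < a" "a \<le> b" "b \<le> 1/4" "2*a = b"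
    by (auto simp: power2_eq_square)
  have "continuous_on {a..b} (\<lambda>x. witness (2*x))"
  proof (rule continuous_on_compose2[of "{b..1}" witness])
    show "continuous_on {b..1} witness"
      using Suc.IH unfolding b_def .
  qed (use ab in \<open>auto intro: continuous_intros\<close>)
  then have "continuous_on {a..b} (\<lambda>x. witness (2*x) / 2)"
    by (intro continuous_intros) auto
  then have "continuous_on {a..b} witness"
    by (rule continuous_on_eq) (use ab witness_half in auto)
  then have "continuous_on {a..1} witness"
    by (rule continuous_on_Icc_join[OF _ Suc.IH[folded b_def]]) (use ab in auto)
  moreover have "Suc n + 2 = n + 3"
    by simp
  ultimately show ?case
    by (simp only: a_def)
qed

lemma abs_witness_le: "0 \<le> t \<Longrightarrow> t \<le> 1 \<Longrightarrow> \<bar>witness t\<bar> \<le> 4 * t"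
proof -
  assume t: "0 \<le> t" "t \<le> 1"
  show ?thesis
  proof (cases "t = 0")
    case True then show ?thesis by (simp add: witness_def)
  next
    case False
    show ?thesis
    proof (cases "t \<le> 1/2")
      case True then show ?thesis using self_similar_bounds[of t] witness_eq_self_similar[of t] t False by auto
    next
      case False then show ?thesis using t unfolding witness_def by auto
    qed
  qed
qed

lemma continuous_on_witness: "continuous_on {0..1} witness"
  unfolding continuous_on_eq_continuous_within
proof
  fix x :: real assume x: "x \<in> {0..1}"
  show "continuous (at x within {0..1}) witness"
  proof (cases "x = 0")
    case True
    have ev: "eventually (\<lambda>t. norm (witness t) \<le> 4 * \<bar>t\<bar>) (at 0 within {0..1})"
      unfolding eventually_at_filter using abs_witness_le by (intro always_eventually) auto
    have "((\<lambda>t. 4 * \<bar>t\<bar>) \<longlongrightarrow> 4 * \<bar>0\<bar>) (at (0::real) within {0..1})"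
      by (intro tendsto_intros)
    then have "((\<lambda>t. 4 * \<bar>t\<bar>) \<longlongrightarrow> 0) (at (0::real) within {0..1})" by simp
    then have "(witness \<longlongrightarrow> 0) (at 0 within {0..1})" by (rule Lim_null_comparison[OF ev])
    then show ?thesis using True unfolding continuous_within by (simp add: witness_def)
  next
    case False
    then have x0: "0 < x" using x by simp
    obtain m where m: "(1/2::real)^m < x" using real_arch_pow_inv[OF x0, of "1/2"] by auto
    define a :: real where "a = (1/2)^(m+2)"
    have "a \<le> (1/2)^m" unfolding a_def by (rule power_decreasing) auto
    then have ax: "a < x" using m by simp
    have a0: "0 < a" unfolding a_def by simp
    have "continuous (at x within {a..1}) witness"
      using continuous_on_witness_dyadic[of m] x ax
        unfolding a_def[symmetric] continuous_on_eq_continuous_within by auto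
    moreover have "at x within {0..1} = at x within {a..1}"
      by (rule at_within_nhd[of _ "{a<..}"]) (use ax a0 in auto)
    ultimately show ?thesis by simp
  qed
qed

definition head_fibre :: "real \<Rightarrow> real set" where
  "head_fibre y = {t. 0 < t \<and> t \<le> 1/2 \<and> witness t = y}"

definition vee_fibre :: "real \<Rightarrow> real set" where
  "vee_fibre y = {t. 1/4 < t \<and> t \<le> 1/2 \<and> vee t = y}"

definition tail_fibre :: "real \<Rightarrow> real set" where
  "tail_fibre y = {t. 1/2 < t \<and> t \<le> 1 \<and> witness t = y}"

definition head_fibre_size :: "real \<Rightarrow> nat" where
  "head_fibre_size y = (if y \<le> 0 \<or> y > 1 then 0 else if y > 1/2 then 1 else if y = 1/2 then 2 else 3)"

definition vee_fibre_size :: "real \<Rightarrow> nat" where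
  "vee_fibre_size y =
     (if 1/2 \<le> y \<and> y \<le> 1 then 1 else if 1/4 < y \<and> y < 1/2 then 2 else if y = 1/4 then 1 else 0)"

definition tail_fibre_size :: "real \<Rightarrow> nat" where
  "tail_fibre_size y =
     (if 0 \<le> y \<and> y < 1/2 then 1 else if y = 1/2 then 2 else if 1/2 < y \<and> y < 1 then 3
      else if y = 1 then 1 else 0)"

lemma card_vee_fibre: "finite (vee_fibre y) \<and> card (vee_fibre y) = vee_fibre_size y"
proof -
  consider "1/2 < y \<and> y \<le> 1" | "y = 1/2" | "1/4 < y \<and> y < 1/2" | "y = 1/4"
    | "y < 1/4 \<or> y > 1" by linarith
  then show ?thesis
  proof cases
    case 1
    then have "vee_fibre y = {(y+2)/6}" unfolding vee_fibre_def vee_def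
      by (intro set_eqI) (auto simp: field_simps split: if_splits)
    then show ?thesis using 1 by (simp add: vee_fibre_size_def)
  next
    case 2
    then have "vee_fibre y = {5/12}" unfolding vee_fibre_def vee_def
      by (intro set_eqI) (auto simp: field_simps split: if_splits)
    then show ?thesis unfolding 2 by (simp add: vee_fibre_size_def)
  next
    case 3
    then have "vee_fibre y = {(y+2)/6, (1-y)/2}" unfolding vee_fibre_def vee_def
      by (intro set_eqI) (auto simp: field_simps split: if_splits)
    moreover have "(y+2)/6 \<noteq> (1-y)/2" using 3 by (simp add: field_simps)
    ultimately show ?thesis using 3 by (simp add: vee_fibre_size_def)
  next
    case 4
    then have "vee_fibre y = {3/8}" unfolding vee_fibre_def vee_def
      by (intro set_eqI) (auto simp: field_simps split: if_splits)
    then show ?thesis unfolding 4 by (simp add: vee_fibre_size_def)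
  next
    case 5
    then have "vee_fibre y = {}" unfolding vee_fibre_def vee_def
      by (intro set_eqI) (auto simp: field_simps split: if_splits)
    then show ?thesis using 5 by (auto simp: vee_fibre_size_def)
  qed
qed

lemma card_tail_fibre: "finite (tail_fibre y) \<and> card (tail_fibre y) = tail_fibre_size y"
proof -
  consider "0 \<le> y \<and> y < 1/2" | "y = 1/2" | "1/2 < y \<and> y < 1" | "y = 1"
    | "y < 0 \<or> y > 1" by linarith
  then show ?thesis
  proof cases
    case 1
    then have "tail_fibre y = {(4-y)/4}" unfolding tail_fibre_def witness_def
      by (intro set_eqI) (auto simp: field_simps split: if_splits)
    then show ?thesis using 1 by (simp add: tail_fibre_size_def)
  next
    case 2
    then have "tail_fibre y = {5/8, 7/8}" unfolding tail_fibre_def witness_def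
      by (intro set_eqI) (auto simp: field_simps split: if_splits)
    then show ?thesis unfolding 2 by (simp add: tail_fibre_size_def)
  next
    case 3
    then have "tail_fibre y = {(3-y)/4, (y+2)/4, (4-y)/4}" unfolding tail_fibre_def witness_def
      by (intro set_eqI) (auto simp: field_simps split: if_splits)
    moreover have "(3-y)/4 \<noteq> (y+2)/4" "(3-y)/4 \<noteq> (4-y)/4" "(y+2)/4 \<noteq> (4-y)/4"
      using 3 by (auto simp: field_simps)
    ultimately show ?thesis using 3 by (simp add: tail_fibre_size_def)
  next
    case 4
    then have "tail_fibre y = {3/4}" unfolding tail_fibre_def witness_def
      by (intro set_eqI) (auto simp: field_simps split: if_splits)
    then show ?thesis unfolding 4 by (simp add: tail_fibre_size_def)
  next
    case 5
    then have "tail_fibre y = {}" unfolding tail_fibre_def witness_def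
      by (intro set_eqI) (auto simp: field_simps split: if_splits)
    then show ?thesis using 5 by (auto simp: tail_fibre_size_def)
  qed
qed

lemma head_fibre_empty: "y \<le> 0 \<or> y > 1 \<Longrightarrow> head_fibre y = {}"
  unfolding head_fibre_def using self_similar_bounds witness_eq_self_similar by force

lemma head_fibre_split: "head_fibre y = vee_fibre y \<union> (\<lambda>t. t/2) ` head_fibre (2*y)"
proof
  show "head_fibre y \<subseteq> vee_fibre y \<union> (\<lambda>t. t/2) ` head_fibre (2*y)"
  proof
    fix t assume t: "t \<in> head_fibre y"
    show "t \<in> vee_fibre y \<union> (\<lambda>t. t/2) ` head_fibre (2*y)"
    proof (cases "1/4 < t")
      case True
      then show ?thesis
        using t unfolding head_fibre_def vee_fibre_def by (auto simp: witness_eq_self_similar self_similar_eq_vee)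
    next
      case False
      then have "2*t \<in> head_fibre (2*y)" using t witness_half[of t] unfolding head_fibre_def by auto
      then have "(2*t)/2 \<in> (\<lambda>t. t/2) ` head_fibre (2*y)" by blast
      then show ?thesis by simp
    qed
  qed
next
  show "vee_fibre y \<union> (\<lambda>t. t/2) ` head_fibre (2*y) \<subseteq> head_fibre y"
  proof
    fix t assume t: "t \<in> vee_fibre y \<union> (\<lambda>t. t/2) ` head_fibre (2*y)"
    then show "t \<in> head_fibre y"
    proof
      assume "t \<in> vee_fibre y" then show ?thesis
        unfolding head_fibre_def vee_fibre_def by (auto simp: witness_eq_self_similar self_similar_eq_vee)
    next
      assume "t \<in> (\<lambda>t. t/2) ` head_fibre (2*y)"
      then obtain u where u: "t = u/2" "0 < u" "u \<le> 1/2" "witness u = 2*y" unfolding head_fibre_def by auto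
      have "witness (u/2) = self_similar u / 2"
        using u self_similar_half[of u] witness_eq_self_similar[of "u/2"] by simp
      then show ?thesis using u witness_eq_self_similar[of u] unfolding head_fibre_def by auto
    qed
  qed
qed

lemma card_head_fibre_dyadic:
  "(1/2)^n < y \<Longrightarrow> finite (head_fibre y) \<and> card (head_fibre y) = head_fibre_size y"
proof (induction n arbitrary: y)
  case 0
  then have "head_fibre y = {}" using head_fibre_empty by simp
  then show ?case using 0 by (simp add: head_fibre_size_def)
next
  case (Suc n)
  show ?case
  proof (cases "y > 1")
    case True
    then have "head_fibre y = {}" using head_fibre_empty by simp
    then show ?thesis using True by (simp add: head_fibre_size_def)
  next
    case False
    have "(1/2)^n < 2*y" using Suc.prems by simp
    then have IH: "finite (head_fibre (2*y))" "card (head_fibre (2*y)) = head_fibre_size (2*y)" using Suc.IH by auto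
    have "0 < (1/2::real)^(Suc n)" by simp
    then have y0: "0 < y" using Suc.prems by linarith
    have fin1: "finite ((\<lambda>t. t/2) ` head_fibre (2*y))" using IH by simp
    have c1: "card ((\<lambda>t. t/2) ` head_fibre (2*y)) = head_fibre_size (2*y)"
    proof -
      have "inj_on (\<lambda>t::real. t/2) (head_fibre (2*y))" by (rule inj_onI) simp
      then show ?thesis using IH(2) by (simp add: card_image)
    qed
    have disj: "vee_fibre y \<inter> (\<lambda>t. t/2) ` head_fibre (2*y) = {}"
      unfolding vee_fibre_def head_fibre_def by auto
    note sp = head_fibre_split[of y]
    have "card (head_fibre y) = vee_fibre_size y + head_fibre_size (2*y)"
      unfolding sp using card_vee_fibre[of y] fin1 c1 disj by (simp add: card_Un_disjoint)
    moreover have "vee_fibre_size y + head_fibre_size (2*y) = head_fibre_size y"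
    proof -
      consider "1/2 < y" | "y = 1/2" | "1/4 < y \<and> y < 1/2" | "y = 1/4" | "y < 1/4" by linarith
      then show ?thesis
      proof cases
        case 1 then show ?thesis using False unfolding vee_fibre_size_def head_fibre_size_def by simp
      next
        case 2 then show ?thesis unfolding vee_fibre_size_def head_fibre_size_def by simp
      next
        case 3 then show ?thesis unfolding vee_fibre_size_def head_fibre_size_def by simp
      next
        case 4 then show ?thesis unfolding vee_fibre_size_def head_fibre_size_def by simp
      next
        case 5 then show ?thesis using y0 unfolding vee_fibre_size_def head_fibre_size_def by simp
      qed
    qed
    ultimately show ?thesis unfolding sp using card_vee_fibre[of y] fin1 by simp
  qed
qed

lemma card_head_fibre: "finite (head_fibre y) \<and> card (head_fibre y) = head_fibre_size y"
proof (cases "y \<le> 0")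
  case True
  then show ?thesis using head_fibre_empty by (simp add: head_fibre_size_def)
next
  case False
  then obtain n where "(1/2::real)^n < y" using real_arch_pow_inv[of y "1/2"] by auto
  then show ?thesis by (rule card_head_fibre_dyadic)
qed

lemma card_witness_fibre: "finite {t\<in>{0..1}. witness t = y} \<and>
   card {t\<in>{0..1}. witness t = y} = (if y < 0 \<or> y > 1 then 0 else if y = 0 \<or> y = 1 then 2 else 4)"
proof -
  define origin where "origin = (if y = 0 then {0::real} else {})"
  have eq: "{t\<in>{0..1}. witness t = y} = origin \<union> head_fibre y \<union> tail_fibre y"
    unfolding origin_def head_fibre_def tail_fibre_def by (auto simp: witness_def)
  have disjoint: "origin \<inter> head_fibre y = {}" "(origin \<union> head_fibre y) \<inter> tail_fibre y = {}"
    unfolding origin_def head_fibre_def tail_fibre_def by auto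
  have origin_card: "finite origin" "card origin = (if y = 0 then 1 else 0)" unfolding origin_def by auto
  have "card {t\<in>{0..1}. witness t = y} = card origin + head_fibre_size y + tail_fibre_size y"
    unfolding eq using disjoint origin_card card_head_fibre[of y] card_tail_fibre[of y] by (simp add: card_Un_disjoint)
  moreover have "card origin + head_fibre_size y + tail_fibre_size y
      = (if y < 0 \<or> y > 1 then 0 else if y = 0 \<or> y = 1 then 2 else 4)"
    unfolding origin_card(2) head_fibre_size_def tail_fibre_size_def by auto
  ultimately show ?thesis unfolding eq using origin_card card_head_fibre[of y] card_tail_fibre[of y] by simp
qed

theorem mainTheorem7:
  shows "(\<not> (\<exists>p :: real poly. Omega (poly p) = {0, 2, 4}))
       \<and> (\<exists>f :: real \<Rightarrow> real. continuous_on {0..1} f \<and> Omega f = {0, 2, 4})"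
proof
  show "\<not> (\<exists>p :: real poly. Omega (poly p) = {0, 2, 4})"
  proof
    assume "\<exists>p :: real poly. Omega (poly p) = {0, 2, 4}"
    then obtain p :: "real poly" where p: "Omega (poly p) = {0, 2, 4}"
      by blast
    obtain y where "infinite {x\<in>{0..1}. poly p x = y} \<or> odd (card {x\<in>{0..1}. poly p x = y})"
      using poly_fibre_infinite_or_odd by blast
    moreover have "even k" if "enat k \<in> {0, 2, 4}" for k
      using that by (auto simp: zero_enat_def numeral_eq_enat)
    ultimately have "fibre_card (poly p) y \<notin> {0, 2, 4}"
      unfolding fibre_card_def by auto
    moreover have "fibre_card (poly p) y \<in> Omega (poly p)"
      unfolding Omega_def by blast
    ultimately show False
      using p by blast
  qed
  have "fibre_card witness y = (if y < 0 \<or> y > 1 then 0 else if y = 0 \<or> y = 1 then 2 else 4)" for y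
    using card_witness_fibre[of y] unfolding fibre_card_def by (simp add: zero_enat_def numeral_eq_enat)
  then have "Omega witness = {0, 2, 4}"
    unfolding Omega_def by (auto intro: exI[of _ 2] exI[of _ 0] exI[of _ "1/2"])
  then show "\<exists>f :: real \<Rightarrow> real. continuous_on {0..1} f \<and> Omega f = {0, 2, 4}"
    using continuous_on_witness by blast
qed

end
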